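(* Let $S\subset\mathbb{R}^n_+$ be compact and convex with $0\in S$. Let $a\in\mathbb{C}^n\setminus\mathbb{C}^{*n}$, $a\neq0$, let $J=\{j_1<\dots<j_\ell\}\subset\{1,\dots,n\}$ be the set of indices $j$ with $a_j\neq0$, and let $S_J\subseteq\mathbb{R}^\ell$ be the set of all $t\in\mathbb{R}^\ell$ such that the point $s\in\mathbb{R}^n_+$ defined by $s_{j_k}=t_k$ ($k=1,\dots,\ell$) and $s_j=0$ for $j\notin J$ belongs to $S$. Then $$H_S(a)=H_{S_J}(a_{j_1},\dots,a_{j_\ell}).$$
   Context: $\mathbb{R}_+=[0,\infty)$, $\mathbb{C}^{*n}=(\mathbb{C}\setminus\{0\})^n$. For a compact set $T\subset\mathbb{R}^k_+$ with $0\in T$, $\varphi_T(\xi)=\max_{t\in T}\langle t,\xi\rangle$ and the logarithmic supporting function $H_T\colon\mathbb{C}^k\to\mathbb{R}_+$ is $H_T(z)=\varphi_T(\log|z_1|,\dots,\log|z_k|)$ for $z\in\mathbb{C}^{*k}$ and $H_T(z)=\limsup_{\mathbb{C}^{*k}\ni w\to z}H_T(w)$ for $z\in\mathbb{C}^k\setminus\mathbb{C}^{*k}$. *)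

theory Defs
  imports "HOL-Analysis.Analysis"
begin

text \<open>Convention: a point of R^k (resp. C^k) is a function nat => real (resp. complex)
  vanishing at indices >= k; coordinates are indexed 0..k-1. Topology on such
  functions is the product topology (HOL-Analysis Function_Topology), which on the
  subspace of functions supported in {0..<k} coincides with the Euclidean topology.\<close>

definition Rk :: "nat \<Rightarrow> (nat \<Rightarrow> real) set" where
  "Rk k = {t. \<forall>i\<ge>k. t i = 0}"

definition Rk_plus :: "nat \<Rightarrow> (nat \<Rightarrow> real) set" where
  "Rk_plus k = {t. (\<forall>i<k. 0 \<le> t i) \<and> (\<forall>i\<ge>k. t i = 0)}"

definition Ck :: "nat \<Rightarrow> (nat \<Rightarrow> complex) set" where
  "Ck k = {z. \<forall>i\<ge>k. z i = 0}"

definition Cstar :: "nat \<Rightarrow> (nat \<Rightarrow> complex) set" where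
  "Cstar k = {z. (\<forall>i<k. z i \<noteq> 0) \<and> (\<forall>i\<ge>k. z i = 0)}"

text \<open>Convexity of a set of points, written out (nat => real carries no vector space
  instance in the library).\<close>
definition convex_pts :: "(nat \<Rightarrow> real) set \<Rightarrow> bool" where
  "convex_pts S \<longleftrightarrow> (\<forall>x\<in>S. \<forall>y\<in>S. \<forall>u::real. 0 \<le> u \<and> u \<le> 1 \<longrightarrow>
      (\<lambda>i. u * x i + (1 - u) * y i) \<in> S)"

definition phi :: "nat \<Rightarrow> (nat \<Rightarrow> real) set \<Rightarrow> (nat \<Rightarrow> real) \<Rightarrow> real" where
  "phi k T \<xi> = Sup ((\<lambda>t. \<Sum>i<k. t i * \<xi> i) ` T)"

text \<open>Logarithmic supporting function H_T on C^k (extended-real valued; it is in fact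
  finite and nonnegative for compact T containing 0).\<close>
definition H :: "nat \<Rightarrow> (nat \<Rightarrow> real) set \<Rightarrow> (nat \<Rightarrow> complex) \<Rightarrow> ereal" where
  "H k T z = (if z \<in> Cstar k then ereal (phi k T (\<lambda>i. if i < k then ln (cmod (z i)) else 0))
     else Limsup (at z within Cstar k)
            (\<lambda>w. ereal (phi k T (\<lambda>i. if i < k then ln (cmod (w i)) else 0))))"

definition jseq :: "nat set \<Rightarrow> nat \<Rightarrow> nat" where
  "jseq J k = sorted_list_of_set J ! k"

definition slice :: "(nat \<Rightarrow> real) set \<Rightarrow> nat set \<Rightarrow> (nat \<Rightarrow> real) set" where
  "slice S J = {t \<in> Rk (card J). \<exists>s\<in>S. (\<forall>k<card J. s (jseq J k) = t k) \<and> (\<forall>j. j \<notin> J \<longrightarrow> s j = 0)}"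

end

theory Submission
  imports Defs
begin

(* As w -> a inside (C\{0})^n, log|w_j| -> log|a_j| for j in J, and log|w_j| -> -oo for j not in J.
   Since S lies in R^n_+, every s in S supported on J keeps its value <s, log|a|> in the limit, while
   any other s is pushed down by L * (sum of s_j over j not in J) with L arbitrarily large.  By
   compactness that sum is bounded below by a positive constant wherever <s, log|a|> exceeds the
   maximum over the face {s in S. s_j = 0 for j not in J}, so the penalty is uniform and H_S(a) is that
   maximum, which is phi_{S_J} at the reindexed point. *)

lemma compact_penalty:
  fixes g h :: "'a::t2_space \<Rightarrow> real"
  assumes "compact S" "continuous_on S g" "continuous_on S h"
    and "\<And>s. s \<in> S \<Longrightarrow> 0 \<le> h s" "\<And>s. s \<in> S \<Longrightarrow> h s = 0 \<Longrightarrow> g s \<le> c" "0 < \<epsilon>"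
  obtains L where "\<And>s. s \<in> S \<Longrightarrow> g s - L * h s \<le> c + \<epsilon>"
proof (cases "\<forall>s\<in>S. g s < c + \<epsilon>")
  case True
  then show ?thesis
    using that[of 0] by fastforce
next
  case False
  define K where "K = {s \<in> S. c + \<epsilon> \<le> g s}"
  have "K \<noteq> {}"
    using False unfolding K_def by (auto simp: not_less)
  have "closed K"
    unfolding K_def
    by (intro continuous_on_closed_Collect_le continuous_on_const assms(2) compact_imp_closed assms(1))
  moreover have "S \<inter> K = K"
    unfolding K_def by auto
  ultimately have "compact K"
    using compact_Int_closed[OF assms(1)] by metis
  then obtain s0 where s0: "s0 \<in> K" "\<And>s. s \<in> K \<Longrightarrow> h s0 \<le> h s"
    using continuous_attains_inf[OF _ \<open>K \<noteq> {}\<close> continuous_on_subset[OF assms(3)]]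
    unfolding K_def by blast
  obtain s1 where s1: "\<And>s. s \<in> S \<Longrightarrow> g s \<le> g s1"
    using continuous_attains_sup[OF assms(1) _ assms(2)] \<open>K \<noteq> {}\<close> unfolding K_def by blast
  have "0 < h s0"
    using s0(1) assms(4,5)[of s0] \<open>0 < \<epsilon>\<close> unfolding K_def by force
  define L where "L = max 0 ((g s1 - c) / h s0)"
  have "0 \<le> L"
    by (simp add: L_def)
  show ?thesis
  proof (rule that)
    fix s assume "s \<in> S"
    show "g s - L * h s \<le> c + \<epsilon>"
    proof (cases "s \<in> K")
      case True
      have "g s1 - c \<le> L * h s0"
        using \<open>0 < h s0\<close> by (simp add: L_def pos_divide_le_eq max_mult_distrib_right)
      also have "\<dots> \<le> L * h s"
        using s0(2)[OF True] \<open>0 \<le> L\<close> by (rule mult_left_mono)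
      finally show ?thesis
        using s1[OF \<open>s \<in> S\<close>] \<open>0 < \<epsilon>\<close> by linarith
    next
      case False
      then have "g s < c + \<epsilon>"
        using \<open>s \<in> S\<close> unfolding K_def by auto
      moreover have "0 \<le> L * h s"
        using \<open>0 \<le> L\<close> assms(4)[OF \<open>s \<in> S\<close>] by simp
      ultimately show ?thesis
        by linarith
    qed
  qed
qed

lemma bdd_above_small_multiple:
  fixes f :: "'a \<Rightarrow> real"
  assumes "bdd_above (f ` S)" "0 < \<epsilon>"
  obtains \<eta> where "0 < \<eta>" "\<And>s. s \<in> S \<Longrightarrow> \<eta> * f s \<le> \<epsilon>"
proof -
  obtain B where B: "\<And>s. s \<in> S \<Longrightarrow> f s \<le> B"
    using assms(1) unfolding bdd_above_def by auto
  define \<eta> where "\<eta> = \<epsilon> / (\<bar>B\<bar> + 1)"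
  have "0 < \<eta>"
    unfolding \<eta>_def using assms(2) by simp
  moreover have "\<eta> * f s \<le> \<epsilon>" if "s \<in> S" for s
  proof -
    have "\<eta> * f s \<le> \<eta> * (\<bar>B\<bar> + 1)"
      using \<open>0 < \<eta>\<close> B[OF that] by (intro mult_left_mono) auto
    also have "\<dots> = \<epsilon>"
      unfolding \<eta>_def by (simp add: field_simps add_pos_nonneg)
    finally show ?thesis .
  qed
  ultimately show ?thesis
    by (rule that)
qed

lemma continuous_on_pairing:
  "continuous_on A (\<lambda>s::nat \<Rightarrow> real. \<Sum>i<k. s i * x i)"
  by (intro continuous_intros continuous_on_subset[OF continuous_on_product_coordinates]) auto

lemma bdd_above_pairing_image:
  assumes "compact (S :: (nat \<Rightarrow> real) set)"
  shows "bdd_above ((\<lambda>s. \<Sum>i<k. s i * x i) ` S)"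
  by (intro bounded_imp_bdd_above compact_imp_bounded compact_continuous_image
      continuous_on_pairing assms)

lemma pairing_le_phi:
  assumes "compact T" "S \<subseteq> T" "s \<in> S"
  shows "(\<Sum>i<k. s i * x i) \<le> phi k S x"
  unfolding phi_def
  by (intro cSup_upper imageI assms(3) bdd_above_mono[OF bdd_above_pairing_image[OF assms(1), where k=k and x=x]]
      image_mono assms(2))

lemma phi_le:
  assumes "S \<noteq> {}" "\<And>s. s \<in> S \<Longrightarrow> (\<Sum>i<k. s i * x i) \<le> b"
  shows "phi k S x \<le> b"
  unfolding phi_def using assms by (auto intro!: cSup_least)

lemma phi_cong: "(\<And>i. i < k \<Longrightarrow> x i = y i) \<Longrightarrow> phi k S x = phi k S y"
  unfolding phi_def by simp

lemma H_Cstar: "z \<in> Cstar k \<Longrightarrow> H k T z = ereal (phi k T (\<lambda>i. ln (cmod (z i))))"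
  unfolding H_def by (auto intro: phi_cong)

lemma H_not_Cstar:
  "z \<notin> Cstar k \<Longrightarrow>
    H k T z = Limsup (at z within Cstar k) (\<lambda>w. ereal (phi k T (\<lambda>i. ln (cmod (w i)))))"
  unfolding H_def by (simp cong: phi_cong)

lemma jseq_bij_betw: "finite J \<Longrightarrow> bij_betw (jseq J) {..<card J} J"
  unfolding jseq_def by (rule bij_betw_nth) auto

lemma sum_jseq_reindex:
  fixes s x :: "nat \<Rightarrow> real"
  assumes "finite J" "J \<subseteq> {..<n}" "\<And>j. j \<notin> J \<Longrightarrow> s j = 0"
  shows "(\<Sum>k<card J. s (jseq J k) * x (jseq J k)) = (\<Sum>i<n. s i * x i)"
proof -
  have "(\<Sum>k<card J. s (jseq J k) * x (jseq J k)) = (\<Sum>i\<in>J. s i * x i)"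
    using sum.reindex_bij_betw[OF jseq_bij_betw[OF assms(1)]] .
  also have "\<dots> = (\<Sum>i<n. s i * x i)"
    using assms(2,3) by (intro sum.mono_neutral_left) auto
  finally show ?thesis .
qed

lemma phi_slice:
  assumes "finite J" "J \<subseteq> {..<n}"
  shows "phi (card J) (slice S J) (\<lambda>k. if k < card J then x (jseq J k) else 0)
       = phi n {s \<in> S. \<forall>j. j \<notin> J \<longrightarrow> s j = 0} x"
proof -
  let ?l = "card J"
  have "(\<lambda>t. \<Sum>k<?l. t k * (if k < ?l then x (jseq J k) else 0)) ` slice S J
      = (\<lambda>s. \<Sum>i<n. s i * x i) ` {s \<in> S. \<forall>j. j \<notin> J \<longrightarrow> s j = 0}"
  proof (intro equalityI subsetI)
    fix v assume "v \<in> (\<lambda>t. \<Sum>k<?l. t k * (if k < ?l then x (jseq J k) else 0)) ` slice S J"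
    then obtain t s where v: "v = (\<Sum>k<?l. t k * (if k < ?l then x (jseq J k) else 0))"
      and s: "s \<in> S" "\<forall>k<?l. s (jseq J k) = t k" "\<forall>j. j \<notin> J \<longrightarrow> s j = 0"
      unfolding slice_def by blast
    have "v = (\<Sum>k<?l. s (jseq J k) * x (jseq J k))"
      unfolding v using s(2) by (intro sum.cong) auto
    also have "\<dots> = (\<Sum>i<n. s i * x i)"
      using s(3) by (intro sum_jseq_reindex assms) auto
    finally show "v \<in> (\<lambda>s. \<Sum>i<n. s i * x i) ` {s \<in> S. \<forall>j. j \<notin> J \<longrightarrow> s j = 0}"
      using s by blast
  next
    fix v assume "v \<in> (\<lambda>s. \<Sum>i<n. s i * x i) ` {s \<in> S. \<forall>j. j \<notin> J \<longrightarrow> s j = 0}"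
    then obtain s where v: "v = (\<Sum>i<n. s i * x i)" and s: "s \<in> S" "\<forall>j. j \<notin> J \<longrightarrow> s j = 0"
      by blast
    define t where "t = (\<lambda>k. if k < ?l then s (jseq J k) else 0)"
    have "t \<in> slice S J"
      unfolding slice_def Rk_def t_def using s by auto
    moreover have "v = (\<Sum>k<?l. t k * (if k < ?l then x (jseq J k) else 0))"
      unfolding v t_def using s(2) by (simp add: sum_jseq_reindex[OF assms])
    ultimately show "v \<in> (\<lambda>t. \<Sum>k<?l. t k * (if k < ?l then x (jseq J k) else 0)) ` slice S J"
      by blast
  qed
  then show ?thesis
    unfolding phi_def by simp
qed

lemma coordinate_tendsto: "((\<lambda>w. w i) \<longlongrightarrow> a i) (at a within A)"
proof -
  have "((\<lambda>w. w i) \<longlongrightarrow> a i) (at a within UNIV)"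
    using continuous_on_product_coordinates[of i] unfolding continuous_on_def by blast
  then show ?thesis
    by (rule tendsto_within_subset) simp
qed

lemma islimpt_Cstar:
  assumes "a \<in> Ck n" "a \<notin> Cstar n"
  shows "a islimpt Cstar n"
proof -
  obtain i0 where i0: "i0 < n" "a i0 = 0"
    using assms unfolding Ck_def Cstar_def by auto
  define p where "p = (\<lambda>r::real. \<lambda>i. if i < n \<and> a i = 0 then complex_of_real r else a i)"
  have "continuous_on UNIV p"
    unfolding p_def
  proof (rule continuous_on_coordinatewise_then_product)
    show "continuous_on UNIV (\<lambda>r. if i < n \<and> a i = 0 then complex_of_real r else a i)" for i
      by (cases "i < n \<and> a i = 0") (auto intro!: continuous_intros)
  qed
  then have "(\<lambda>m. p (inverse (real (Suc m)))) \<longlonglongrightarrow> p 0"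
    by (intro isCont_tendsto_compose[OF _ LIMSEQ_inverse_real_of_nat])
      (simp add: continuous_on_eq_continuous_at)
  moreover have "p 0 = a"
    unfolding p_def by auto
  moreover have "p (inverse (real (Suc m))) \<in> Cstar n - {a}" for m
  proof -
    have nonzero: "(1::complex) + of_nat m \<noteq> 0"
      by (metis of_nat_Suc of_nat_eq_0_iff nat.distinct(1))
    then have "p (inverse (real (Suc m))) i0 \<noteq> a i0"
      unfolding p_def using i0 by auto
    moreover have "p (inverse (real (Suc m))) \<in> Cstar n"
      using assms(1) nonzero unfolding p_def Cstar_def Ck_def by auto
    ultimately show ?thesis by auto
  qed
  ultimately show ?thesis
    unfolding islimpt_sequential by (intro exI[of _ "\<lambda>m. p (inverse (real (Suc m)))"]) auto
qed

lemma tendsto_pairing_ln_cmod: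
  fixes s :: "nat \<Rightarrow> real" and a :: "nat \<Rightarrow> complex"
  assumes "\<And>i. a i = 0 \<Longrightarrow> s i = 0"
  shows "((\<lambda>w. \<Sum>i<n. s i * ln (cmod (w i))) \<longlongrightarrow> (\<Sum>i<n. s i * ln (cmod (a i))))
           (at a within A)"
proof (intro tendsto_sum)
  fix i
  show "((\<lambda>w. s i * ln (cmod (w i))) \<longlongrightarrow> s i * ln (cmod (a i))) (at a within A)"
  proof (cases "a i = 0")
    case True
    then show ?thesis using assms by simp
  next
    case False
    then show ?thesis by (intro tendsto_intros coordinate_tendsto) auto
  qed
qed

lemma Limsup_phi_ln_cmod_ge:
  assumes "compact S" "a islimpt A" "s \<in> S" "\<And>i. a i = 0 \<Longrightarrow> s i = 0"
  shows "ereal (\<Sum>i<n. s i * ln (cmod (a i)))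
           \<le> Limsup (at a within A) (\<lambda>w. ereal (phi n S (\<lambda>i. ln (cmod (w i)))))"
proof -
  have "Limsup (at a within A) (\<lambda>w. ereal (\<Sum>i<n. s i * ln (cmod (w i))))
      = ereal (\<Sum>i<n. s i * ln (cmod (a i)))"
    using assms(2,4)
    by (intro lim_imp_Limsup tendsto_ereal tendsto_pairing_ln_cmod) (auto simp: trivial_limit_within)
  moreover have "Limsup (at a within A) (\<lambda>w. ereal (\<Sum>i<n. s i * ln (cmod (w i))))
      \<le> Limsup (at a within A) (\<lambda>w. ereal (phi n S (\<lambda>i. ln (cmod (w i)))))"
    using assms(1,3) by (intro Limsup_mono always_eventually allI) (simp add: pairing_le_phi)
  ultimately show ?thesis
    by simp
qed

text \<open>For \<open>a i = 0\<close> the bound reads \<open>\<eta> - L\<close>, because \<open>ln 0 = 0\<close> in HOL.\<close>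
lemma eventually_ln_cmod_le:
  assumes "0 < \<eta>"
  shows "\<forall>\<^sub>F w in at a within Cstar n.
           \<forall>i<n. ln (cmod (w i)) \<le> ln (cmod (a i)) + \<eta> - L * of_bool (a i = 0)"
proof -
  have "\<forall>\<^sub>F w in at a within Cstar n. ln (cmod (w i)) \<le> ln (cmod (a i)) + \<eta> - L * of_bool (a i = 0)"
    if "i < n" for i
  proof (cases "a i = 0")
    case True
    have "((\<lambda>w. cmod (w i)) \<longlongrightarrow> cmod (a i)) (at a within Cstar n)"
      by (intro tendsto_intros coordinate_tendsto)
    from order_tendstoD(2)[OF this, of "exp (- L)"]
    have "\<forall>\<^sub>F w in at a within Cstar n. cmod (w i) < exp (- L)"
      using True by simp
    moreover have "\<forall>\<^sub>F w in at a within Cstar n. w \<in> Cstar n"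
      by (simp add: eventually_at_filter)
    ultimately show ?thesis
    proof eventually_elim
      case (elim w)
      then have "0 < cmod (w i)"
        using \<open>i < n\<close> unfolding Cstar_def by auto
      then have "ln (cmod (w i)) < - L"
        using elim ln_less_cancel_iff[of "cmod (w i)" "exp (- L)"] by simp
      then show ?case
        using True assms by simp
    qed
  next
    case False
    have "((\<lambda>w. ln (cmod (w i))) \<longlongrightarrow> ln (cmod (a i))) (at a within Cstar n)"
      using False by (intro tendsto_intros coordinate_tendsto) auto
    from order_tendstoD(2)[OF this, of "ln (cmod (a i)) + \<eta>"] show ?thesis
      using assms False by (auto elim: eventually_mono)
  qed
  then have "\<forall>\<^sub>F w in at a within Cstar n.
      \<forall>i\<in>{..<n}. ln (cmod (w i)) \<le> ln (cmod (a i)) + \<eta> - L * of_bool (a i = 0)"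
    by (intro eventually_ball_finite) auto
  then show ?thesis
    by (simp only: Ball_def lessThan_iff)
qed

lemma Rk_plus_pairing_indicator_eq_0_iff:
  assumes "s \<in> Rk_plus n"
  shows "(\<Sum>i<n. s i * of_bool (P i)) = 0 \<longleftrightarrow> (\<forall>i. P i \<longrightarrow> s i = 0)"
proof -
  have "(\<Sum>i<n. s i * of_bool (P i)) = 0 \<longleftrightarrow> (\<forall>i<n. s i * of_bool (P i) = 0)"
    using assms unfolding Rk_plus_def by (subst sum_nonneg_eq_0_iff) auto
  also have "\<dots> \<longleftrightarrow> (\<forall>i. P i \<longrightarrow> s i = 0)"
  proof (intro iffI allI impI)
    fix i assume "\<forall>i<n. s i * of_bool (P i) = 0" "P i"
    then show "s i = 0"
      using assms unfolding Rk_plus_def by (cases "i < n") auto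
  qed auto
  finally show ?thesis .
qed

lemma pairing_le_penalised:
  fixes s x y z :: "nat \<Rightarrow> real"
  assumes "\<And>i. i < n \<Longrightarrow> 0 \<le> s i" "\<And>i. i < n \<Longrightarrow> y i \<le> x i + \<eta> - L * z i"
  shows "(\<Sum>i<n. s i * y i) \<le> (\<Sum>i<n. s i * x i) - L * (\<Sum>i<n. s i * z i) + \<eta> * (\<Sum>i<n. s i * 1)"
proof -
  have "(\<Sum>i<n. s i * y i) \<le> (\<Sum>i<n. s i * (x i + \<eta> - L * z i))"
    using assms by (intro sum_mono mult_left_mono) auto
  also have "\<dots> = (\<Sum>i<n. s i * x i) - L * (\<Sum>i<n. s i * z i) + \<eta> * (\<Sum>i<n. s i * 1)"
    unfolding sum_distrib_left sum_subtractf[symmetric] sum.distrib[symmetric]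
    by (rule sum.cong) (simp_all add: algebra_simps)
  finally show ?thesis .
qed

lemma Limsup_phi_ln_cmod_le:
  assumes "S \<subseteq> Rk_plus n" "compact S" "(\<lambda>_. 0) \<in> S"
  shows "Limsup (at a within Cstar n) (\<lambda>w. ereal (phi n S (\<lambda>i. ln (cmod (w i)))))
           \<le> ereal (phi n {s \<in> S. \<forall>i. a i = 0 \<longrightarrow> s i = 0} (\<lambda>i. ln (cmod (a i))))"
proof (rule ereal_le_epsilon2)
  fix \<epsilon> :: real assume "0 < \<epsilon>"
  define c where "c = phi n {s \<in> S. \<forall>i. a i = 0 \<longrightarrow> s i = 0} (\<lambda>i. ln (cmod (a i)))"
  define g where "g = (\<lambda>s::nat \<Rightarrow> real. \<Sum>i<n. s i * ln (cmod (a i)))"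
  define h where "h = (\<lambda>s::nat \<Rightarrow> real. \<Sum>i<n. s i * of_bool (a i = 0))"
  have nonneg: "0 \<le> s i" if "s \<in> S" for s i
    using assms(1) that unfolding Rk_plus_def by (cases "i < n") auto
  have g_le: "g s \<le> c" if "s \<in> S" "h s = 0" for s
  proof -
    have "s \<in> Rk_plus n"
      using assms(1) \<open>s \<in> S\<close> by blast
    then have "\<forall>i. a i = 0 \<longrightarrow> s i = 0"
      using \<open>h s = 0\<close> unfolding h_def by (rule Rk_plus_pairing_indicator_eq_0_iff[THEN iffD1])
    then show ?thesis
      unfolding g_def c_def using \<open>s \<in> S\<close> by (intro pairing_le_phi[OF assms(2)]) auto
  qed
  have h_nonneg: "0 \<le> h s" if "s \<in> S" for s
    unfolding h_def using nonneg[OF that] by (intro sum_nonneg) simp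
  have g_cont: "continuous_on S g" and h_cont: "continuous_on S h"
    unfolding g_def h_def by (rule continuous_on_pairing)+
  have "0 < \<epsilon> / 2"
    using \<open>0 < \<epsilon>\<close> by simp
  then obtain L where L: "\<And>s. s \<in> S \<Longrightarrow> g s - L * h s \<le> c + \<epsilon> / 2"
    using compact_penalty[OF assms(2) g_cont h_cont h_nonneg g_le] by blast
  obtain \<eta> where "0 < \<eta>" and \<eta>: "\<And>s. s \<in> S \<Longrightarrow> \<eta> * (\<Sum>i<n. s i * 1) \<le> \<epsilon> / 2"
    using bdd_above_small_multiple[OF bdd_above_pairing_image[OF assms(2), where k=n and x="\<lambda>_. 1"]
        \<open>0 < \<epsilon> / 2\<close>] by blast
  have "\<forall>\<^sub>F w in at a within Cstar n. ereal (phi n S (\<lambda>i. ln (cmod (w i)))) \<le> ereal (c + \<epsilon>)"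
    using eventually_ln_cmod_le[OF \<open>0 < \<eta>\<close>, where a=a and n=n and L=L]
  proof eventually_elim
    case (elim w)
    have "(\<Sum>i<n. s i * ln (cmod (w i))) \<le> c + \<epsilon>" if "s \<in> S" for s
    proof -
      have "(\<Sum>i<n. s i * ln (cmod (w i))) \<le> g s - L * h s + \<eta> * (\<Sum>i<n. s i * 1)"
        unfolding g_def h_def using nonneg[OF that] elim
        by (intro pairing_le_penalised[where y="\<lambda>i. ln (cmod (w i))"]) auto
      also have "\<dots> \<le> c + \<epsilon>"
        using L[OF that] \<eta>[OF that] by linarith
      finally show ?thesis .
    qed
    then have "phi n S (\<lambda>i. ln (cmod (w i))) \<le> c + \<epsilon>"
      using assms(3) by (intro phi_le) auto
    then show ?case
      by simp
  qed
  then show "Limsup (at a within Cstar n) (\<lambda>w. ereal (phi n S (\<lambda>i. ln (cmod (w i)))))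
      \<le> ereal c + ereal \<epsilon>"
    by (simp add: Limsup_bounded)
qed

lemma H_eq_phi_support_face:
  assumes "S \<subseteq> Rk_plus n" "compact S" "(\<lambda>_. 0) \<in> S" "a \<in> Ck n" "a \<notin> Cstar n"
  shows "H n S a = ereal (phi n {s \<in> S. \<forall>i. a i = 0 \<longrightarrow> s i = 0} (\<lambda>i. ln (cmod (a i))))"
proof -
  let ?F = "{s \<in> S. \<forall>i. a i = 0 \<longrightarrow> s i = 0}"
  let ?L = "Limsup (at a within Cstar n) (\<lambda>w. ereal (phi n S (\<lambda>i. ln (cmod (w i)))))"
  have "ereal (phi n ?F (\<lambda>i. ln (cmod (a i)))) \<le> ?L"
  proof (rule ereal_le_real)
    fix z assume "?L \<le> ereal z"
    have "phi n ?F (\<lambda>i. ln (cmod (a i))) \<le> z"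
    proof (rule phi_le)
      show "?F \<noteq> {}"
        using assms(3) by auto
      fix s assume "s \<in> ?F"
      have "ereal (\<Sum>i<n. s i * ln (cmod (a i))) \<le> ?L"
        by (rule Limsup_phi_ln_cmod_ge[OF assms(2) islimpt_Cstar[OF assms(4,5)]])
          (use \<open>s \<in> ?F\<close> in auto)
      then have "ereal (\<Sum>i<n. s i * ln (cmod (a i))) \<le> ereal z"
        using \<open>?L \<le> ereal z\<close> by (rule order_trans)
      then show "(\<Sum>i<n. s i * ln (cmod (a i))) \<le> z"
        by simp
    qed
    then show "ereal (phi n ?F (\<lambda>i. ln (cmod (a i)))) \<le> ereal z"
      by simp
  qed
  moreover have "?L \<le> ereal (phi n ?F (\<lambda>i. ln (cmod (a i))))"
    by (rule Limsup_phi_ln_cmod_le[OF assms(1-3)])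
  ultimately have "?L = ereal (phi n ?F (\<lambda>i. ln (cmod (a i))))"
    by (rule antisym[rotated])
  then show ?thesis
    using H_not_Cstar[OF assms(5)] by simp
qed

theorem proposition3p3:
  fixes n :: nat and S :: "(nat \<Rightarrow> real) set" and a :: "nat \<Rightarrow> complex"
  assumes "S \<subseteq> Rk_plus n" and "compact S" and "convex_pts S" and "(\<lambda>_. 0) \<in> S"
    and "a \<in> Ck n" and "a \<notin> Cstar n" and "a \<noteq> (\<lambda>_. 0)"
  shows "H n S a = H (card {j. j < n \<and> a j \<noteq> 0}) (slice S {j. j < n \<and> a j \<noteq> 0})
           (\<lambda>k. if k < card {j. j < n \<and> a j \<noteq> 0} then a (jseq {j. j < n \<and> a j \<noteq> 0} k) else 0)"
proof -
  define J where "J = {j. j < n \<and> a j \<noteq> 0}"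
  have J: "finite J" "J \<subseteq> {..<n}"
    unfolding J_def by auto
  have "(\<lambda>k. if k < card J then a (jseq J k) else 0) \<in> Cstar (card J)"
    using bij_betwE[OF jseq_bij_betw[OF J(1)]] unfolding Cstar_def J_def by auto
  then have "H (card J) (slice S J) (\<lambda>k. if k < card J then a (jseq J k) else 0)
      = ereal (phi (card J) (slice S J) (\<lambda>k. if k < card J then ln (cmod (a (jseq J k))) else 0))"
    by (simp add: H_Cstar cong: phi_cong)
  also have "\<dots> = ereal (phi n {s \<in> S. \<forall>j. j \<notin> J \<longrightarrow> s j = 0} (\<lambda>i. ln (cmod (a i))))"
    using phi_slice[OF J] by simp
  also have "{s \<in> S. \<forall>j. j \<notin> J \<longrightarrow> s j = 0} = {s \<in> S. \<forall>i. a i = 0 \<longrightarrow> s i = 0}"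
    using assms(1) unfolding J_def Rk_plus_def by (auto simp: not_less)
  also have "ereal (phi n \<dots> (\<lambda>i. ln (cmod (a i)))) = H n S a"
    using H_eq_phi_support_face[OF assms(1,2,4,5,6)] by simp
  finally show ?thesis
    unfolding J_def by simp
qed

end
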